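(* Let $\mathcal{X},\mathcal{Y}$ be finite, $p(X,Y)$ with $p(X)$ of full support, and $q(T|X)\in C(\mathcal{X},\mathcal{T})$. Then (i) $q_{\pi_{\mathcal{X}}}(Y,T)=q(Y,T)$, in particular $I_{q_{\pi_{\mathcal{X}}}}(Y;T)=I_q(Y;T)$; (ii) $I_{q_{\pi_{\mathcal{X}}}}(X;T)\le I_q(X;T)$, with equality if and only if $q_{\pi_{\mathcal{X}}}(T|X)=q(T|X)$.
   Context: $\mathcal{T}=\mathbb{N}$. The relation $x\sim_{\mathcal{X}}x'\iff p(Y|x)=p(Y|x')$ has partition $\{\mathcal{X}_j\}_j$ and projection $\pi_{\mathcal{X}}$. $q_{\pi_{\mathcal{X}}}(t|x):=\sum_j\delta_{x\in\mathcal{X}_j}\frac{\sum_{x'\in\mathcal{X}_j}q(t|x')p(x')}{p(\mathcal{X}_j)}$. For any channel $r(T|X)$, joints are $r(x,y,t)=p(x,y)r(t|x)$ and mutual informations are computed from them. *)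

theory Defs
  imports "HOL-Analysis.Analysis"
begin

definition is_joint_pmf :: "('x::finite \<Rightarrow> 'y::finite \<Rightarrow> real) \<Rightarrow> bool" where
  "is_joint_pmf p \<longleftrightarrow> (\<forall>x y. 0 \<le> p x y) \<and> (\<Sum>x\<in>UNIV. \<Sum>y\<in>UNIV. p x y) = 1"

definition marg_x :: "('x::finite \<Rightarrow> 'y::finite \<Rightarrow> real) \<Rightarrow> 'x \<Rightarrow> real" where
  "marg_x p x = (\<Sum>y\<in>UNIV. p x y)"

definition is_channel :: "('x \<Rightarrow> nat \<Rightarrow> real) \<Rightarrow> bool" where
  "is_channel q \<longleftrightarrow> (\<forall>x t. 0 \<le> q x t) \<and> (\<forall>x. ((\<lambda>t. q x t) has_sum 1) UNIV)"

definition equiv_x :: "('x::finite \<Rightarrow> 'y::finite \<Rightarrow> real) \<Rightarrow> 'x \<Rightarrow> 'x \<Rightarrow> bool" where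
  "equiv_x p x x' \<longleftrightarrow> (\<forall>y. p x y / marg_x p x = p x' y / marg_x p x')"

definition proj_channel ::
  "('x::finite \<Rightarrow> 'y::finite \<Rightarrow> real) \<Rightarrow> ('x \<Rightarrow> nat \<Rightarrow> real) \<Rightarrow> 'x \<Rightarrow> nat \<Rightarrow> real" where
  "proj_channel p q x t =
     (\<Sum>x'\<in>{x'. equiv_x p x x'}. q x' t * marg_x p x') / (\<Sum>x'\<in>{x'. equiv_x p x x'}. marg_x p x')"

definition mutual_info :: "('a::finite \<Rightarrow> nat \<Rightarrow> real) \<Rightarrow> real" where
  "mutual_info J = infsum (\<lambda>t. \<Sum>a\<in>UNIV. if J a t = 0 then 0
       else J a t * log 2 (J a t / (infsum (\<lambda>t'. J a t') UNIV * (\<Sum>a'\<in>UNIV. J a' t)))) UNIV"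

definition joint_YT :: "('x::finite \<Rightarrow> 'y::finite \<Rightarrow> real) \<Rightarrow> ('x \<Rightarrow> nat \<Rightarrow> real) \<Rightarrow> 'y \<Rightarrow> nat \<Rightarrow> real" where
  "joint_YT p r y t = (\<Sum>x\<in>UNIV. p x y * r x t)"

definition joint_XT :: "('x::finite \<Rightarrow> 'y::finite \<Rightarrow> real) \<Rightarrow> ('x \<Rightarrow> nat \<Rightarrow> real) \<Rightarrow> 'x \<Rightarrow> nat \<Rightarrow> real" where
  "joint_XT p r x t = (\<Sum>y\<in>UNIV. p x y * r x t)"

end

theory Submission
  imports Defs
begin

text \<open>The projected channel replaces \<open>q(\<cdot>|x)\<close> by its \<open>p(x)\<close>-weighted average over the
  class of \<open>x\<close>. Such an average leaves every sum \<open>\<Sum>\<^sub>x p(x) r(t|x) f(x)\<close> unchanged when \<open>f\<close>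
  is constant on classes; taking \<open>f(x) = p(y|x)\<close> gives (i), and \<open>f = 1\<close> shows that the
  output marginal \<open>r(t)\<close> is unchanged. Writing \<open>I(X;T) = \<Sum>\<^sub>t \<Sum>\<^sub>x p(x) r(t|x) log (r(t|x) / r(t))\<close>
  and using that \<open>log (q\<^sub>\<pi>(t|x) / r(t))\<close> is again constant on classes, the difference
  \<open>I\<^sub>q(X;T) - I\<^sub>q\<^sub>\<pi>(X;T)\<close> becomes \<open>\<Sum>\<^sub>t D(p q(t|\<cdot>) \<parallel> p q\<^sub>\<pi>(t|\<cdot>))\<close>, a sum of relative entropies of
  measures of equal mass. Gibbs' inequality makes each term nonnegative, and zero only
  if \<open>q\<^sub>\<pi>(t|\<cdot>) = q(t|\<cdot>)\<close>.\<close>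

lemma has_sum_sum:
  fixes f :: "'i \<Rightarrow> 'a \<Rightarrow> real"
  assumes "finite I" "\<And>i. i \<in> I \<Longrightarrow> (f i has_sum s i) A"
  shows "((\<lambda>a. \<Sum>i\<in>I. f i a) has_sum (\<Sum>i\<in>I. s i)) A"
  using assms by (induction I rule: finite_induct) (simp_all add: has_sum_add)

lemma ln_less_minus_one:
  fixes x :: real
  assumes "0 < x" "x \<noteq> 1"
  shows "ln x < x - 1"
proof -
  have "ln x = 2 * ln (sqrt x)"
    using assms by (simp add: ln_sqrt)
  also have "\<dots> \<le> 2 * (sqrt x - 1)"
    using ln_le_minus_one[of "sqrt x"] assms by simp
  also have "\<dots> < x - 1"
  proof -
    have "0 < (sqrt x - 1)\<^sup>2"
      using assms by simp
    then show ?thesis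
      using assms by (simp add: power2_eq_square algebra_simps)
  qed
  finally show ?thesis .
qed

text \<open>For \<open>a > 0 = b\<close> the value is junk (\<open>log 2 0 = 0\<close>), hence the hypothesis
  \<open>0 < a \<Longrightarrow> 0 < b\<close> in the lemmas below.\<close>
definition kl_term :: "real \<Rightarrow> real \<Rightarrow> real" where
  "kl_term a b = (if a = 0 then 0 else a * log 2 (a / b))"

lemma kl_term_self [simp]: "kl_term a a = 0"
  by (simp add: kl_term_def)

lemma kl_term_gt_diff:
  assumes "0 \<le> a" "0 \<le> b" "0 < a \<Longrightarrow> 0 < b" "a \<noteq> b"
  shows "(a - b) / ln 2 < kl_term a b"
proof (cases "a = 0")
  case True
  then show ?thesis
    using assms by (simp add: kl_term_def)
next
  case False
  then have a: "0 < a" and b: "0 < b"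
    using assms by auto
  have "ln (b / a) < b / a - 1"
    using ln_less_minus_one[of "b / a"] a b assms(4) by simp
  then have "a - b < a * ln (a / b)"
    using a b by (simp add: ln_div field_simps)
  then show ?thesis
    using a by (simp add: kl_term_def log_def divide_strict_right_mono)
qed

lemma kl_term_ge_diff:
  assumes "0 \<le> a" "0 \<le> b" "0 < a \<Longrightarrow> 0 < b"
  shows "(a - b) / ln 2 \<le> kl_term a b"
  using kl_term_gt_diff[OF assms] by (cases "a = b") auto

lemma kl_term_le_log:
  assumes "0 \<le> a" "a \<le> c * b" "0 < c"
  shows "kl_term a b \<le> a * log 2 c"
proof (cases "a = 0")
  case False
  then have "0 < a" "0 < c * b"
    using assms by auto
  then have "0 < b"
    using \<open>0 < c\<close> by (simp add: zero_less_mult_iff)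
  moreover have "a / b \<le> c" and "0 < a / b"
    using assms \<open>0 < a\<close> \<open>0 < b\<close> by (simp_all add: pos_divide_le_eq mult.commute)
  ultimately have "log 2 (a / b) \<le> log 2 c"
    by (intro log_mono) auto
  then show ?thesis
    using \<open>0 < a\<close> by (simp add: kl_term_def)
qed (simp add: kl_term_def)

lemma gibbs_inequality:
  assumes "finite A" "\<And>x. x \<in> A \<Longrightarrow> 0 \<le> a x" "\<And>x. x \<in> A \<Longrightarrow> 0 \<le> b x"
    and "\<And>x. x \<in> A \<Longrightarrow> 0 < a x \<Longrightarrow> 0 < b x" and "sum a A = sum b A"
  shows "0 \<le> (\<Sum>x\<in>A. kl_term (a x) (b x))"
    and "(\<Sum>x\<in>A. kl_term (a x) (b x)) = 0 \<longleftrightarrow> (\<forall>x\<in>A. a x = b x)"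
proof -
  define g where "g x = kl_term (a x) (b x) - (a x - b x) / ln 2" for x
  have g_nonneg: "0 \<le> g x" if "x \<in> A" for x
    using kl_term_ge_diff[of "a x" "b x"] assms that by (simp add: g_def)
  have "(\<Sum>x\<in>A. (a x - b x) / ln 2) = 0"
    using assms(5) by (simp add: sum_divide_distrib[symmetric] sum_subtractf)
  then have sum_g: "(\<Sum>x\<in>A. kl_term (a x) (b x)) = sum g A"
    by (simp add: g_def sum_subtractf)
  then show "0 \<le> (\<Sum>x\<in>A. kl_term (a x) (b x))"
    using g_nonneg by (simp add: sum_nonneg)
  have "g x = 0 \<longleftrightarrow> a x = b x" if "x \<in> A" for x
    using kl_term_gt_diff[of "a x" "b x"] assms that by (cases "a x = b x") (auto simp: g_def)
  then show "(\<Sum>x\<in>A. kl_term (a x) (b x)) = 0 \<longleftrightarrow> (\<forall>x\<in>A. a x = b x)"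
    unfolding sum_g using sum_nonneg_eq_0_iff[OF assms(1) g_nonneg] by auto
qed

lemma sum_class_pos:
  fixes P :: "'a::finite \<Rightarrow> real"
  assumes "equivp E" "\<And>x. 0 < P x"
  shows "0 < (\<Sum>x'\<in>{x'. E x x'}. P x')"
proof -
  have "P x \<le> (\<Sum>x'\<in>{x'. E x x'}. P x')"
    using assms by (intro member_le_sum) (auto simp: equivp_reflp less_imp_le)
  then show ?thesis
    using assms(2)[of x] by linarith
qed

lemma sum_class_average:
  fixes P g f :: "'a::finite \<Rightarrow> real"
  assumes E: "equivp E" and P: "\<And>x. 0 < P x" and f: "\<And>x x'. E x x' \<Longrightarrow> f x = f x'"
  shows "(\<Sum>x\<in>UNIV. P x * ((\<Sum>x'\<in>{x'. E x x'}. g x' * P x') / (\<Sum>x'\<in>{x'. E x x'}. P x')) * f x)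
       = (\<Sum>x\<in>UNIV. P x * g x * f x)"
proof -
  define Z where "Z x = (\<Sum>x'\<in>{x'. E x x'}. P x')" for x
  have Z_eq: "Z x = Z x'" if "E x x'" for x x'
    using E that by (simp add: Z_def equivp_def)
  have E_sym: "E x x' \<longleftrightarrow> E x' x" for x x'
    using E by (blast intro: equivp_symp)
  have sum_class: "(\<Sum>x'\<in>{x'. E x x'}. h x') = (\<Sum>x'\<in>UNIV. if E x x' then h x' else 0)"
    for x and h :: "'a \<Rightarrow> real"
    by (simp add: sum.If_cases)
  have "P x * ((\<Sum>x'\<in>{x'. E x x'}. g x' * P x') / Z x) * f x
      = (\<Sum>x'\<in>UNIV. if E x x' then P x * (g x' * P x' * f x' / Z x') else 0)" for x
    unfolding sum_class sum_divide_distrib sum_distrib_left sum_distrib_right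
    by (intro sum.cong refl) (simp add: Z_eq f mult_ac)
  then have "(\<Sum>x\<in>UNIV. P x * ((\<Sum>x'\<in>{x'. E x x'}. g x' * P x') / Z x) * f x)
      = (\<Sum>x\<in>UNIV. \<Sum>x'\<in>UNIV. if E x x' then P x * (g x' * P x' * f x' / Z x') else 0)"
    by simp
  also have "\<dots> = (\<Sum>x'\<in>UNIV. \<Sum>x\<in>UNIV. if E x' x then P x * (g x' * P x' * f x' / Z x') else 0)"
    by (subst sum.swap) (simp only: E_sym)
  also have "\<dots> = (\<Sum>x'\<in>UNIV. g x' * P x' * f x' / Z x' * Z x')"
  proof (intro sum.cong refl)
    fix x'
    show "(\<Sum>x\<in>UNIV. if E x' x then P x * (g x' * P x' * f x' / Z x') else 0)
        = g x' * P x' * f x' / Z x' * Z x'"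
      unfolding Z_def sum_class sum_distrib_left by (intro sum.cong refl) simp
  qed
  also have "\<dots> = (\<Sum>x\<in>UNIV. P x * g x * f x)"
    using sum_class_pos[of E P] E P by (intro sum.cong refl) (simp add: Z_def less_imp_neq[symmetric])
  finally show ?thesis
    by (simp add: Z_def)
qed

lemma equivp_equiv_x: "equivp (equiv_x p)"
  by (auto intro!: equivpI reflpI sympI transpI simp: equiv_x_def)

lemma proj_channel_cong: "equiv_x p x x' \<Longrightarrow> proj_channel p q x t = proj_channel p q x' t"
  using equivp_equiv_x[of p] by (simp add: proj_channel_def equivp_def)

lemma sum_proj_channel:
  fixes p :: "'x::finite \<Rightarrow> 'y::finite \<Rightarrow> real"
  assumes "\<forall>x. marg_x p x > 0" and "\<And>x x'. equiv_x p x x' \<Longrightarrow> f x = f x'"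
  shows "(\<Sum>x\<in>UNIV. marg_x p x * proj_channel p q x t * f x) = (\<Sum>x\<in>UNIV. marg_x p x * q x t * f x)"
  unfolding proj_channel_def
  using sum_class_average[OF equivp_equiv_x[of p], where P="marg_x p" and f=f and g="\<lambda>x. q x t"] assms by simp

lemma proj_channel_pos:
  fixes p :: "'x::finite \<Rightarrow> 'y::finite \<Rightarrow> real"
  assumes pos: "\<forall>x. marg_x p x > 0" and q: "is_channel q" and "0 < q x t"
  shows "0 < proj_channel p q x t"
proof -
  have "q x t * marg_x p x \<le> (\<Sum>x'\<in>{x'. equiv_x p x x'}. q x' t * marg_x p x')"
    using q pos by (intro member_le_sum) (auto simp: equiv_x_def is_channel_def less_imp_le)
  moreover have "0 < q x t * marg_x p x"
    using assms by simp
  ultimately show ?thesis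
    using sum_class_pos[OF equivp_equiv_x[of p], where P="marg_x p" and x=x] pos by (simp add: proj_channel_def)
qed

lemma is_channel_proj_channel:
  fixes p :: "'x::finite \<Rightarrow> 'y::finite \<Rightarrow> real"
  assumes pos: "\<forall>x. marg_x p x > 0" and q: "is_channel q"
  shows "is_channel (proj_channel p q)"
  unfolding is_channel_def
proof (intro conjI allI)
  fix x
  define S where "S = {x'. equiv_x p x x'}"
  define Z where "Z = (\<Sum>x'\<in>S. marg_x p x')"
  have "0 < Z"
    using sum_class_pos[OF equivp_equiv_x[of p], where P="marg_x p" and x=x] pos by (simp add: Z_def S_def)
  have proj: "proj_channel p q x t = (\<Sum>x'\<in>S. marg_x p x' / Z * q x' t)" for t
    unfolding proj_channel_def S_def[symmetric] Z_def[symmetric] sum_divide_distrib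
    by (intro sum.cong refl) simp
  have "((\<lambda>t. \<Sum>x'\<in>S. marg_x p x' / Z * q x' t) has_sum (\<Sum>x'\<in>S. marg_x p x' / Z * 1)) UNIV"
    using q by (intro has_sum_sum has_sum_cmult_right) (auto simp: is_channel_def)
  moreover have "(\<Sum>x'\<in>S. marg_x p x' / Z * 1) = 1"
    using \<open>0 < Z\<close> by (simp add: Z_def sum_divide_distrib[symmetric])
  ultimately show "((\<lambda>t. proj_channel p q x t) has_sum 1) UNIV"
    unfolding proj by simp
  fix t
  show "0 \<le> proj_channel p q x t"
    unfolding proj using pos q \<open>0 < Z\<close> by (intro sum_nonneg) (auto simp: is_channel_def less_imp_le)
qed

lemma joint_YT_proj_channel:
  fixes p :: "'x::finite \<Rightarrow> 'y::finite \<Rightarrow> real"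
  assumes pos: "\<forall>x. marg_x p x > 0"
  shows "joint_YT p (proj_channel p q) = joint_YT p q"
proof (intro ext)
  fix y t
  have joint: "joint_YT p w y t = (\<Sum>x\<in>UNIV. marg_x p x * w x t * (p x y / marg_x p x))"
    for w :: "'x \<Rightarrow> nat \<Rightarrow> real"
    unfolding joint_YT_def using pos by (intro sum.cong refl) (simp add: less_imp_neq[symmetric])
  show "joint_YT p (proj_channel p q) y t = joint_YT p q y t"
    unfolding joint by (rule sum_proj_channel[OF pos]) (simp add: equiv_x_def)
qed

definition out_marg :: "('x::finite \<Rightarrow> 'y::finite \<Rightarrow> real) \<Rightarrow> ('x \<Rightarrow> nat \<Rightarrow> real) \<Rightarrow> nat \<Rightarrow> real" where
  "out_marg p w t = (\<Sum>x\<in>UNIV. marg_x p x * w x t)"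

definition xt_info :: "('x::finite \<Rightarrow> 'y::finite \<Rightarrow> real) \<Rightarrow> ('x \<Rightarrow> nat \<Rightarrow> real) \<Rightarrow> nat \<Rightarrow> real" where
  "xt_info p w t = (\<Sum>x\<in>UNIV. kl_term (marg_x p x * w x t) (marg_x p x * out_marg p w t))"

lemma mutual_info_joint_XT:
  assumes "is_channel w"
  shows "mutual_info (joint_XT p w) = (\<Sum>\<^sub>\<infinity>t. xt_info p w t)"
proof -
  have joint: "joint_XT p w = (\<lambda>x t. marg_x p x * w x t)"
    unfolding joint_XT_def marg_x_def by (simp add: sum_distrib_right)
  have "((\<lambda>t. marg_x p x * w x t) has_sum (marg_x p x * 1)) UNIV" for x
    using assms by (intro has_sum_cmult_right) (auto simp: is_channel_def)
  then have input_marg: "(\<Sum>\<^sub>\<infinity>t. marg_x p x * w x t) = marg_x p x" for x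
    by (simp add: infsumI)
  show ?thesis
    unfolding mutual_info_def xt_info_def kl_term_def out_marg_def joint input_marg by simp
qed

lemma out_marg_proj_channel:
  assumes "\<forall>x. marg_x p x > 0"
  shows "out_marg p (proj_channel p q) t = out_marg p q t"
  using sum_proj_channel[OF assms, where f="\<lambda>_. 1"] by (simp add: out_marg_def)

lemma joint_le_out_marg:
  assumes "\<forall>x. marg_x p x > 0" and "is_channel w"
  shows "marg_x p x * w x t \<le> out_marg p w t"
  unfolding out_marg_def using assms
  by (intro member_le_sum) (auto simp: is_channel_def less_imp_le)

lemma xt_info_nonneg:
  assumes p: "is_joint_pmf p" and pos: "\<forall>x. marg_x p x > 0" and w: "is_channel w"
  shows "0 \<le> xt_info p w t"
  unfolding xt_info_def
proof (rule gibbs_inequality(1))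
  fix x
  assume "0 < marg_x p x * w x t"
  then show "0 < marg_x p x * out_marg p w t"
    using joint_le_out_marg[OF pos w, of x t] pos by simp
next
  show "(\<Sum>x\<in>UNIV. marg_x p x * w x t) = (\<Sum>x\<in>UNIV. marg_x p x * out_marg p w t)"
    using p by (simp add: out_marg_def is_joint_pmf_def marg_x_def sum_distrib_right[symmetric])
qed (use pos w in \<open>auto simp: is_channel_def out_marg_def less_imp_le intro!: sum_nonneg mult_nonneg_nonneg\<close>)

lemma xt_info_le_entropy:
  assumes pos: "\<forall>x. marg_x p x > 0" and w: "is_channel w"
  shows "xt_info p w t \<le> (\<Sum>x\<in>UNIV. marg_x p x * w x t * log 2 (1 / marg_x p x))"
  unfolding xt_info_def
proof (intro sum_mono kl_term_le_log)
  fix x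
  show "marg_x p x * w x t \<le> 1 / marg_x p x * (marg_x p x * out_marg p w t)"
    using joint_le_out_marg[OF pos w, of x t] pos by (simp add: less_imp_neq[symmetric])
qed (use pos w in \<open>auto simp: is_channel_def less_imp_le\<close>)

lemma xt_info_summable:
  assumes p: "is_joint_pmf p" and pos: "\<forall>x. marg_x p x > 0" and w: "is_channel w"
  shows "xt_info p w summable_on UNIV"
proof (rule summable_on_comparison_test)
  have "((\<lambda>t. \<Sum>x\<in>UNIV. marg_x p x * log 2 (1 / marg_x p x) * w x t)
      has_sum (\<Sum>x\<in>UNIV. marg_x p x * log 2 (1 / marg_x p x) * 1)) UNIV"
    using w by (intro has_sum_sum has_sum_cmult_right) (auto simp: is_channel_def)
  then show "(\<lambda>t. \<Sum>x\<in>UNIV. marg_x p x * w x t * log 2 (1 / marg_x p x)) summable_on UNIV"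
    by (auto simp: summable_on_def mult_ac)
qed (use xt_info_le_entropy[OF pos w] xt_info_nonneg[OF p pos w] in auto)

lemma xt_info_proj_channel_diff:
  assumes pos: "\<forall>x. marg_x p x > 0" and q: "is_channel q"
  shows "xt_info p q t - xt_info p (proj_channel p q) t
       = (\<Sum>x\<in>UNIV. kl_term (marg_x p x * q x t) (marg_x p x * proj_channel p q x t))"
proof -
  define P where "P = marg_x p"
  define u where "u x = q x t" for x
  define v where "v x = proj_channel p q x t" for x
  define R where "R = out_marg p q t"
  define f where "f x = (if v x = 0 then 0 else log 2 (v x / R))" for x
  have P: "0 < P x" for x
    using pos by (simp add: P_def)
  have "xt_info p (proj_channel p q) t = (\<Sum>x\<in>UNIV. P x * v x * f x)"
    unfolding xt_info_def out_marg_proj_channel[OF pos] R_def[symmetric]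
    using P by (intro sum.cong refl) (simp add: kl_term_def P_def v_def f_def)
  also have "\<dots> = (\<Sum>x\<in>UNIV. P x * u x * f x)"
    \<comment> \<open>\<open>f\<close> is constant on classes because \<open>v\<close> is.\<close>
    unfolding P_def u_def v_def
    by (rule sum_proj_channel[OF pos]) (simp add: f_def v_def proj_channel_cong[of p _ _ q t])
  finally have "xt_info p q t - xt_info p (proj_channel p q) t
      = (\<Sum>x\<in>UNIV. kl_term (P x * u x) (P x * R) - P x * u x * f x)"
    by (simp add: xt_info_def P_def u_def R_def sum_subtractf)
  also have "\<dots> = (\<Sum>x\<in>UNIV. kl_term (P x * u x) (P x * v x))"
  proof (intro sum.cong refl)
    fix x
    show "kl_term (P x * u x) (P x * R) - P x * u x * f x = kl_term (P x * u x) (P x * v x)"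
    proof (cases "u x = 0")
      case False
      then have "0 < u x"
        using q by (simp add: u_def is_channel_def less_le)
      then have "0 < v x"
        using proj_channel_pos[OF pos q] by (simp add: u_def v_def)
      have "0 < P x * u x"
        using P[of x] \<open>0 < u x\<close> by simp
      also have "\<dots> \<le> R"
        using joint_le_out_marg[OF pos q] by (simp add: R_def P_def u_def)
      finally have "0 < R" .
      then show ?thesis
        using P[of x] \<open>0 < u x\<close> \<open>0 < v x\<close>
        by (simp add: kl_term_def f_def log_divide right_diff_distrib)
    qed (simp add: kl_term_def)
  qed
  finally show ?thesis
    by (simp add: P_def u_def v_def)
qed

lemma xt_info_proj_channel_le:
  assumes pos: "\<forall>x. marg_x p x > 0" and q: "is_channel q"
  shows "xt_info p (proj_channel p q) t \<le> xt_info p q t"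
    and "xt_info p (proj_channel p q) t = xt_info p q t \<longleftrightarrow> (\<forall>x. proj_channel p q x t = q x t)"
proof -
  have proj: "is_channel (proj_channel p q)"
    using is_channel_proj_channel[OF pos q] .
  let ?a = "\<lambda>x. marg_x p x * q x t" and ?b = "\<lambda>x. marg_x p x * proj_channel p q x t"
  have "0 \<le> ?a x" "0 \<le> ?b x" for x
    using pos q proj by (simp_all add: is_channel_def less_imp_le)
  moreover have "0 < ?b x" if "0 < ?a x" for x
    using that pos[rule_format, of x] proj_channel_pos[OF pos q, of x t] by (simp add: zero_less_mult_iff)
  moreover have "sum ?a UNIV = sum ?b UNIV"
    using out_marg_proj_channel[OF pos] by (simp add: out_marg_def)
  ultimately have gibbs: "0 \<le> (\<Sum>x\<in>UNIV. kl_term (?a x) (?b x))"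
    "(\<Sum>x\<in>UNIV. kl_term (?a x) (?b x)) = 0 \<longleftrightarrow> (\<forall>x\<in>UNIV. ?a x = ?b x)"
    using gibbs_inequality[of UNIV ?a ?b] by simp_all
  then show "xt_info p (proj_channel p q) t \<le> xt_info p q t"
    using xt_info_proj_channel_diff[OF pos q, of t] by simp
  show "xt_info p (proj_channel p q) t = xt_info p q t \<longleftrightarrow> (\<forall>x. proj_channel p q x t = q x t)"
  proof -
    have "xt_info p (proj_channel p q) t = xt_info p q t
        \<longleftrightarrow> xt_info p q t - xt_info p (proj_channel p q) t = 0"
      by linarith
    also have "\<dots> \<longleftrightarrow> (\<forall>x. ?a x = ?b x)"
      using gibbs(2) xt_info_proj_channel_diff[OF pos q, of t] by simp
    also have "\<dots> \<longleftrightarrow> (\<forall>x. proj_channel p q x t = q x t)"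
      using pos by (metis less_irrefl mult_left_cancel)
    finally show ?thesis .
  qed
qed

theorem lemma4:
  fixes p :: "'x::finite \<Rightarrow> 'y::finite \<Rightarrow> real"
    and q :: "'x \<Rightarrow> nat \<Rightarrow> real"
  assumes "is_joint_pmf p"
    and "\<forall>x. marg_x p x > 0"
    and "is_channel q"
  shows "joint_YT p (proj_channel p q) = joint_YT p q
     \<and> mutual_info (joint_YT p (proj_channel p q)) = mutual_info (joint_YT p q)
     \<and> mutual_info (joint_XT p (proj_channel p q)) \<le> mutual_info (joint_XT p q)
     \<and> (mutual_info (joint_XT p (proj_channel p q)) = mutual_info (joint_XT p q)
          \<longleftrightarrow> proj_channel p q = q)"
proof -
  note p = assms(1) and pos = assms(2) and q = assms(3)
  have proj: "is_channel (proj_channel p q)"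
    using is_channel_proj_channel[OF pos q] .
  have sums: "(xt_info p (proj_channel p q) has_sum (\<Sum>\<^sub>\<infinity>t. xt_info p (proj_channel p q) t)) UNIV"
    "(xt_info p q has_sum (\<Sum>\<^sub>\<infinity>t. xt_info p q t)) UNIV"
    using xt_info_summable[OF p pos proj] xt_info_summable[OF p pos q] by simp_all
  have le: "(\<Sum>\<^sub>\<infinity>t. xt_info p (proj_channel p q) t) \<le> (\<Sum>\<^sub>\<infinity>t. xt_info p q t)"
    using has_sum_mono[OF sums] xt_info_proj_channel_le(1)[OF pos q] by blast
  have "(\<Sum>\<^sub>\<infinity>t. xt_info p (proj_channel p q) t) < (\<Sum>\<^sub>\<infinity>t. xt_info p q t)"
    if neq: "proj_channel p q \<noteq> q"
  proof -
    obtain x t where "proj_channel p q x t \<noteq> q x t"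
      using neq by (auto simp: fun_eq_iff)
    then have "xt_info p (proj_channel p q) t < xt_info p q t"
      using xt_info_proj_channel_le[OF pos q, of t] by (auto simp: order_less_le)
    then show ?thesis
      using has_sum_strict_mono[OF sums] xt_info_proj_channel_le(1)[OF pos q] by blast
  qed
  then show ?thesis
    using joint_YT_proj_channel[OF pos] le
    unfolding mutual_info_joint_XT[OF q] mutual_info_joint_XT[OF proj] by fastforce
qed

end
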